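(* The infinite words $\mathbf{t}_{3/2}$ and $\mathbf{t}'$ are uniformly recurrent.
   Context: Base-$3/2$ expansions: $\langle 0\rangle_{3/2}$ is the empty word, and for $n\ge 1$, writing $2n=3m+d$ with integers $m\ge 0$, $d\in\{0,1,2\}$, one sets $\langle n\rangle_{3/2}=\langle m\rangle_{3/2}\,d$. The Thue--Morse word in base $3/2$ is $\mathbf{t}_{3/2}=(t_n)_{n\ge0}\in\{0,1\}^{\mathbb{N}}$ where $t_n$ is the sum of the digits of $\langle n\rangle_{3/2}$ modulo $2$; equivalently the unique binary sequence with $t_0=0$, $t_{3n}=t_{3n+1}=t_{2n}$, $t_{3n+2}=1-t_{2n+1}$ for all $n\ge 0$. Dekking's word $\mathbf{t}'=(x_n)_{n\ge0}$ is the unique binary infinite word with $x_0=0$ satisfying $\mathbf{t}'=\beta(x_0x_1)\beta(x_2x_3)\beta(x_4x_5)\cdots$, where $\beta(00)=\beta(01)=010$ and $\beta(10)=\beta(11)=101$; it begins $0100101011011010101011011\cdots$. An infinite word is uniformly recurrent if every finite factor of it occurs infinitely often with bounded gaps, i.e. for every factor $u$ there is $L$ such that every factor of length $L$ contains $u$. *)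

theory Defs
  imports Main "HOL-Library.Sublist"
begin

function base32 :: "nat \<Rightarrow> nat list" where
  "base32 n = (if n = 0 then [] else base32 ((2 * n) div 3) @ [(2 * n) mod 3])"
  by pat_completeness auto
termination
  by (relation "measure id") auto

definition t32 :: "nat \<Rightarrow> nat" where
  "t32 n = sum_list (base32 n) mod 2"

definition beta :: "nat \<Rightarrow> nat \<Rightarrow> nat list" where
  "beta a b = (if a = 0 then [0, 1, 0] else [1, 0, 1])"

text \<open>Dekking's word: the unique binary word x with x 0 = 0 and
  x = beta(x0 x1) beta(x2 x3) ..., i.e. the block of positions 3k, 3k+1, 3k+2
  equals beta (x (2k)) (x (2k+1)).\<close>
definition dekking :: "nat \<Rightarrow> nat" where
  "dekking = (THE x. (\<forall>n. x n \<in> {0, 1}) \<and> x 0 = 0 \<and>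
      (\<forall>k j. j < 3 \<longrightarrow> x (3 * k + j) = beta (x (2 * k)) (x (2 * k + 1)) ! j))"

definition factor :: "(nat \<Rightarrow> 'a) \<Rightarrow> nat \<Rightarrow> nat \<Rightarrow> 'a list" where
  "factor x i n = map (\<lambda>j. x (i + j)) [0..<n]"

definition is_factor :: "'a list \<Rightarrow> (nat \<Rightarrow> 'a) \<Rightarrow> bool" where
  "is_factor u x \<longleftrightarrow> (\<exists>i. factor x i (length u) = u)"

definition uniformly_recurrent :: "(nat \<Rightarrow> 'a) \<Rightarrow> bool" where
  "uniformly_recurrent x \<longleftrightarrow>
     (\<forall>u. is_factor u x \<longrightarrow> (\<exists>L. \<forall>k. sublist u (factor x k L)))"

end

theory Submission
  imports Defs "HOL-Number_Theory.Cong"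
begin

text \<open>Both words satisfy a recurrence f n = (f (g n) + c n) mod 2, where g sends the
  block 3m, 3m+1, 3m+2 into positions near 2m and c is 3-periodic. Iterating it K times
  shows that the block of length K starting at 3^K j is a copy of the prefix of length K
  when f (2^K j) = 0 and its complement otherwise. Both cases occur: if f r = 1 and 2^k
  divides r + 3^K j, then f (2^K j) = 1 or f (r + 3^K j) = 1. Hence every factor u and
  its complement lie in some prefix of length K, and since every window of length
  3^K + K contains a position 3^K j followed by K letters, it contains u.\<close>

lemma coprime_exists_dvd_add_mult:
  fixes a b r :: nat
  assumes "coprime a b" and "0 < b"
  shows "\<exists>j. b dvd r + a * j"
proof -
  obtain x where x: "[a * x = 1] (mod b)"
    using cong_solve_coprime_nat assms(1) by auto
  have "[a * x * (r * (b - 1)) = 1 * (r * (b - 1))] (mod b)"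
    using x by (rule cong_scalar_right)
  then have "[r + a * (x * r * (b - 1)) = r + 1 * (r * (b - 1))] (mod b)"
    by (intro cong_add) (simp_all add: ac_simps)
  also have "r + 1 * (r * (b - 1)) = b * r"
    using assms(2) by (cases b) auto
  finally show ?thesis
    by (metis cong_0_iff cong_mult_self_left cong_trans)
qed

lemma sublist_factor:
  assumes "p \<le> q" and "q + length u \<le> p + L" and "factor x q (length u) = u"
  shows "sublist u (factor x p L)"
proof -
  have "factor x q (length u) = take (length u) (drop (q - p) (factor x p L))"
    using assms(1,2) unfolding factor_def by (auto intro!: nth_equalityI)
  then have "u = take (length u) (drop (q - p) (factor x p L))"
    using assms(3) by simp
  then show ?thesis
    by (metis sublist_order.order_trans sublist_drop sublist_take)
qed

locale parity_recurrence =
  fixes f g c :: "nat \<Rightarrow> nat"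
  assumes f_rec: "f n = (f (g n) + c n) mod 2"
    and g_add_3: "g (n + 3) = g n + 2"
    and g_less: "0 < n \<Longrightarrow> g n < n"
    and g_0: "g 0 = 0"
    and c_add_3: "c (n + 3) = c n"
    and f_0: "f 0 = 0"
    and f_takes_1: "\<exists>r. f r = 1"
begin

lemma f_less_2: "f n < 2"
  by (subst f_rec) simp

lemma g_add_mult_3: "g (n + 3 * m) = g n + 2 * m"
proof (induction m)
  case (Suc m)
  then show ?case
    using g_add_3[of "n + 3 * m"] by (simp add: algebra_simps)
qed simp

lemma c_add_mult_3: "c (n + 3 * m) = c n"
proof (induction m)
  case (Suc m)
  then show ?case
    using c_add_3[of "n + 3 * m"] by (simp add: algebra_simps)
qed simp

lemma funpow_g_le: "(g ^^ k) n \<le> n - k"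
proof (induction k)
  case (Suc k)
  then show ?case
    using g_less[of "(g ^^ k) n"] by (cases "(g ^^ k) n = 0") (auto simp: g_0)
qed simp

lemma funpow_g_eq_0: "n \<le> k \<Longrightarrow> (g ^^ k) n = 0"
  using funpow_g_le[of k n] by simp

lemma f_add_pow3_mult:
  "(g ^^ k) r = 0 \<Longrightarrow> f (r + 3 ^ k * j) = (f (2 ^ k * j) + f r) mod 2"
proof (induction k arbitrary: r j)
  case 0
  then show ?case using f_less_2[of j] by (simp add: f_0)
next
  case (Suc k)
  have "(g ^^ k) (g r) = 0"
    using Suc.prems unfolding funpow_Suc_right comp_apply .
  then have IH: "f (g r + 3 ^ k * (2 * j)) = (f (2 ^ Suc k * j) + f (g r)) mod 2"
    using Suc.IH[of "g r" "2 * j"] by (simp add: ac_simps)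
  have "f (r + 3 ^ Suc k * j) = (f (g (r + 3 * (3 ^ k * j))) + c (r + 3 * (3 ^ k * j))) mod 2"
    by (simp only: power_Suc mult.assoc f_rec[of "r + 3 * (3 ^ k * j)"])
  also have "\<dots> = (f (g r + 3 ^ k * (2 * j)) + c r) mod 2"
    unfolding g_add_mult_3 c_add_mult_3 by (simp add: ac_simps)
  also have "\<dots> = (f (2 ^ Suc k * j) + (f (g r) + c r)) mod 2"
    unfolding IH by (simp add: mod_add_left_eq add.assoc)
  also have "\<dots> = (f (2 ^ Suc k * j) + f r) mod 2"
    by (metis f_rec mod_add_right_eq)
  finally show ?case .
qed

lemma exists_f_pow2_mult_eq_1: "\<exists>m. f (2 ^ k * m) = 1"
proof -
  obtain r where r: "f r = 1"
    using f_takes_1 by blast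
  define K where "K = k + r"
  have "coprime ((3::nat) ^ K) (2 ^ k)"
    by simp
  then obtain j where "2 ^ k dvd r + 3 ^ K * j"
    using coprime_exists_dvd_add_mult by fastforce
  then obtain m where m: "r + 3 ^ K * j = 2 ^ k * m"
    by blast
  have "f (r + 3 ^ K * j) = (f (2 ^ K * j) + 1) mod 2"
    using f_add_pow3_mult[OF funpow_g_eq_0] r by (simp add: K_def)
  then consider "f (2 ^ K * j) = 1" | "f (2 ^ k * m) = 1"
    using f_less_2[of "2 ^ K * j"] m by fastforce
  then show ?thesis
  proof cases
    case 1
    then have "f (2 ^ k * (2 ^ r * j)) = 1"
      by (simp add: K_def power_add mult.assoc)
    then show ?thesis ..
  qed blast
qed

lemma factor_at_pow3_mult:
  assumes "i + l \<le> K"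
  shows "factor f (3 ^ K * j + i) l =
    (if f (2 ^ K * j) = 0 then factor f i l else map (\<lambda>b. 1 - b) (factor f i l))"
proof -
  have "f (3 ^ K * j + (i + r)) =
      (if f (2 ^ K * j) = 0 then f (i + r) else 1 - f (i + r))" if "r < l" for r
  proof -
    have "f (3 ^ K * j + (i + r)) = (f (2 ^ K * j) + f (i + r)) mod 2"
      using f_add_pow3_mult[OF funpow_g_eq_0, of "i + r" K j] assms that by (simp add: ac_simps)
    then show ?thesis
      using f_less_2[of "2 ^ K * j"] f_less_2[of "i + r"] by (auto simp: less_2_cases_iff)
  qed
  then show ?thesis
    unfolding factor_def by (auto simp: add.assoc)
qed

lemma complement_factor_occurs: "\<exists>i'. factor f i' l = map (\<lambda>b. 1 - b) (factor f i l)"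
proof -
  obtain m where "f (2 ^ (i + l) * m) = 1"
    using exists_f_pow2_mult_eq_1 by blast
  then have "factor f (3 ^ (i + l) * m + i) l = map (\<lambda>b. 1 - b) (factor f i l)"
    by (simp add: factor_at_pow3_mult)
  then show ?thesis ..
qed

lemma complement_complement_factor: "map (\<lambda>b. 1 - b) (map (\<lambda>b. 1 - b) (factor f i l)) = factor f i l"
proof -
  have "1 - (1 - f n) = f n" for n
    using f_less_2[of n] by simp
  then show ?thesis
    unfolding factor_def by simp
qed

lemma factor_recurs_with_bounded_gaps:
  "\<exists>L. \<forall>p. \<exists>q. p \<le> q \<and> q + l \<le> p + L \<and> factor f q l = factor f i l"
proof -
  obtain i' where i': "factor f i' l = map (\<lambda>b. 1 - b) (factor f i l)"
    using complement_factor_occurs by blast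
  define K where "K = i + i' + l"
  have "\<exists>q. p \<le> q \<and> q + l \<le> p + (3 ^ K + K) \<and> factor f q l = factor f i l" for p
  proof -
    define j where "j = p div 3 ^ K + 1"
    have "p = 3 ^ K * (p div 3 ^ K) + p mod 3 ^ K" "p mod 3 ^ K < 3 ^ K"
      by simp_all
    moreover have "3 ^ K * j = 3 ^ K * (p div 3 ^ K) + 3 ^ K"
      by (simp add: j_def)
    ultimately have j: "p \<le> 3 ^ K * j" "3 ^ K * j \<le> p + 3 ^ K"
      by linarith+
    show ?thesis
    proof (cases "f (2 ^ K * j) = 0")
      case True
      then have "factor f (3 ^ K * j + i) l = factor f i l"
        by (simp add: factor_at_pow3_mult K_def)
      then show ?thesis
        using j by (intro exI[of _ "3 ^ K * j + i"]) (simp add: K_def)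
    next
      case False
      then have "factor f (3 ^ K * j + i') l = map (\<lambda>b. 1 - b) (factor f i' l)"
        by (simp add: factor_at_pow3_mult K_def)
      also have "\<dots> = factor f i l"
        unfolding i' by (rule complement_complement_factor)
      finally show ?thesis
        using j by (intro exI[of _ "3 ^ K * j + i'"]) (simp add: K_def)
    qed
  qed
  then show ?thesis by blast
qed

theorem uniformly_recurrent: "uniformly_recurrent f"
  unfolding uniformly_recurrent_def is_factor_def
proof (intro allI impI)
  fix u :: "nat list"
  assume "\<exists>i. factor f i (length u) = u"
  then obtain i where u: "factor f i (length u) = u" ..
  obtain L where "\<forall>p. \<exists>q. p \<le> q \<and> q + length u \<le> p + L \<and> factor f q (length u) = u"
    using factor_recurs_with_bounded_gaps[of "length u" i] unfolding u by blast
  then have "sublist u (factor f p L)" for p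
    by (meson sublist_factor)
  then show "\<exists>L. \<forall>p. sublist u (factor f p L)" by blast
qed

end

lemma t32_rec: "t32 n = (t32 (2 * n div 3) + 2 * n mod 3) mod 2"
proof (cases "n = 0")
  case False
  then have "base32 n = base32 (2 * n div 3) @ [2 * n mod 3]"
    by (subst base32.simps) (simp del: base32.simps)
  then show ?thesis
    unfolding t32_def by (simp del: base32.simps add: mod_add_left_eq)
qed (simp add: t32_def)

interpretation t32: parity_recurrence t32 "\<lambda>n. 2 * n div 3" "\<lambda>n. 2 * n mod 3"
proof
  show "t32 n = (t32 (2 * n div 3) + 2 * n mod 3) mod 2" for n
    by (rule t32_rec)
  show "2 * (n + 3) mod 3 = 2 * n mod 3" for n :: nat
    by presburger
  have "t32 2 = 1"
    by (simp add: t32_def)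
  then show "\<exists>r. t32 r = 1" ..
qed (simp_all add: t32_def)

text \<open>Since beta a b = [a, 1 - a, a], Dekking's word satisfies
  x (3k + j) = (x (2k) + [j = 1]) mod 2.\<close>

function dekking_rec :: "nat \<Rightarrow> nat" where
  "dekking_rec n =
    (if n = 0 then 0 else (dekking_rec (2 * (n div 3)) + (if n mod 3 = 1 then 1 else 0)) mod 2)"
  by pat_completeness auto
termination
  by (relation "measure id") auto

declare dekking_rec.simps [simp del]

lemma dekking_rec_0: "dekking_rec 0 = 0"
  by (simp add: dekking_rec.simps)

lemma dekking_rec_eq:
  "dekking_rec n = (dekking_rec (2 * (n div 3)) + (if n mod 3 = 1 then 1 else 0)) mod 2"
  by (cases "n = 0") (simp_all add: dekking_rec.simps[of n] dekking_rec_0)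

lemma dekking_rec_less_2: "dekking_rec n < 2"
  by (subst dekking_rec_eq) simp

lemma beta_nth: "a < 2 \<Longrightarrow> j < 3 \<Longrightarrow> beta a b ! j = (a + (if j = 1 then 1 else 0)) mod 2"
  by (auto simp: beta_def less_2_cases_iff numeral_3_eq_3 less_Suc_eq)

lemma dekking_eq_dekking_rec: "dekking = dekking_rec"
  unfolding dekking_def
proof (rule the_equality)
  show "(\<forall>n. dekking_rec n \<in> {0, 1}) \<and> dekking_rec 0 = 0 \<and>
      (\<forall>k j. j < 3 \<longrightarrow>
        dekking_rec (3 * k + j) = beta (dekking_rec (2 * k)) (dekking_rec (2 * k + 1)) ! j)"
    using dekking_rec_less_2
    by (auto simp: less_2_cases_iff dekking_rec_0 beta_nth dekking_rec_eq[of "3 * _ + _"])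
next
  fix x
  assume x: "(\<forall>n. x n \<in> {0, 1}) \<and> x 0 = 0 \<and>
      (\<forall>k j. j < 3 \<longrightarrow> x (3 * k + j) = beta (x (2 * k)) (x (2 * k + 1)) ! j)"
  have "x n = dekking_rec n" for n
  proof (induction n rule: less_induct)
    case (less n)
    show ?case
    proof (cases "n = 0")
      case False
      then have "x (2 * (n div 3)) = dekking_rec (2 * (n div 3))"
        by (intro less) simp
      moreover have "x n = beta (x (2 * (n div 3))) (x (2 * (n div 3) + 1)) ! (n mod 3)"
        using x div_mult_mod_eq[of n 3] by (metis mod_less_divisor mult.commute zero_less_numeral)
      ultimately show ?thesis
        by (simp add: beta_nth dekking_rec_less_2 dekking_rec_eq[of n])
    qed (simp add: x dekking_rec_0)
  qed
  then show "x = dekking_rec" ..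
qed

interpretation dekking: parity_recurrence dekking_rec
  "\<lambda>n. 2 * (n div 3)" "\<lambda>n. if n mod 3 = 1 then 1 else 0"
proof
  show "dekking_rec n = (dekking_rec (2 * (n div 3)) + (if n mod 3 = 1 then 1 else 0)) mod 2" for n
    by (rule dekking_rec_eq)
  show "2 * ((n + 3) div 3) = 2 * (n div 3) + 2" for n :: nat
    by presburger
  have "dekking_rec 1 = 1"
    using dekking_rec_eq[of 1] by (simp add: dekking_rec_0)
  then show "\<exists>r. dekking_rec r = 1" ..
qed (simp_all add: dekking_rec_0)

theorem corollary13:
  shows "uniformly_recurrent t32 \<and> uniformly_recurrent dekking"
  using t32.uniformly_recurrent dekking.uniformly_recurrent dekking_eq_dekking_rec by simp

end
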